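(* If $C$ is an $(n,k)$ linear code over $H(\mathbb{Z})_{2+e_1+e_2+e_3}$ correcting all errors of Lipschitz weight $2$ or less, then $(7^2)^{n-k}\ge 32n^2+1$. If $C$ is an $(n,k)$ linear code over $H(\mathbb{Z})_{3+e_1+e_2}$ correcting all errors of Lipschitz weight $2$ or less, then $(11^2)^{n-k}\ge 32n^2+1$.
   Context: $H(\mathbb{Z})=\{a_0+a_1e_1+a_2e_2+a_3e_3:a_i\in\mathbb{Z}\}$ (Lipschitz integers) with quaternion multiplication $e_1^2=e_2^2=e_3^2=-1$, $e_1e_2=-e_2e_1=e_3$, $e_3e_1=-e_1e_3=e_2$, $e_2e_3=-e_3e_2=e_1$; $N(q)=a_0^2+a_1^2+a_2^2+a_3^2$. Right congruence: $q_1\equiv_r q_2 \pmod\pi$ iff $q_1-q_2=\delta\pi$ for some $\delta\in H(\mathbb{Z})$; $H(\mathbb{Z})_\pi=H(\mathbb{Z})/H(\mathbb{Z})\pi$, which has $N(\pi)^2$ elements (here $N(2+e_1+e_2+e_3)=7$, $N(3+e_1+e_2)=11$). The Lipschitz weight of a class $\gamma$ is $\min\{|a_0|+|a_1|+|a_2|+|a_3| : a_0+a_1e_1+a_2e_2+a_3e_3\in\gamma\}$; the weight of a vector is the sum of the weights of its components. An $(n,k)$ linear code over $H(\mathbb{Z})_\pi$ is an additive subgroup $C\subseteq H(\mathbb{Z})_\pi^n$ such that $H(\mathbb{Z})_\pi^n/C$ has exactly $(N(\pi)^2)^{n-k}$ cosets. $C$ corrects all errors of weight $t$ or less if all vectors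 of Lipschitz weight at most $t$ lie in pairwise distinct cosets of $C$. *)

theory Defs
  imports Main "HOL-Library.FuncSet"
begin

text \<open>Lipschitz integers a0 + a1 e1 + a2 e2 + a3 e3 with integer coefficients.\<close>
datatype lip = Lip int int int int

fun ladd :: "lip \<Rightarrow> lip \<Rightarrow> lip" where
  "ladd (Lip a0 a1 a2 a3) (Lip b0 b1 b2 b3) = Lip (a0+b0) (a1+b1) (a2+b2) (a3+b3)"

fun lsub :: "lip \<Rightarrow> lip \<Rightarrow> lip" where
  "lsub (Lip a0 a1 a2 a3) (Lip b0 b1 b2 b3) = Lip (a0-b0) (a1-b1) (a2-b2) (a3-b3)"

text \<open>Hamilton product: e1^2=e2^2=e3^2=-1, e1e2=e3, e2e3=e1, e3e1=e2.\<close>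
fun lmul :: "lip \<Rightarrow> lip \<Rightarrow> lip" where
  "lmul (Lip a0 a1 a2 a3) (Lip b0 b1 b2 b3) =
     Lip (a0*b0 - a1*b1 - a2*b2 - a3*b3)
         (a0*b1 + a1*b0 + a2*b3 - a3*b2)
         (a0*b2 - a1*b3 + a2*b0 + a3*b1)
         (a0*b3 + a1*b2 - a2*b1 + a3*b0)"

fun lnorm :: "lip \<Rightarrow> int" where
  "lnorm (Lip a0 a1 a2 a3) = a0^2 + a1^2 + a2^2 + a3^2"

fun lwt :: "lip \<Rightarrow> nat" where
  "lwt (Lip a0 a1 a2 a3) = nat \<bar>a0\<bar> + nat \<bar>a1\<bar> + nat \<bar>a2\<bar> + nat \<bar>a3\<bar>"

definition rcong :: "lip \<Rightarrow> lip \<Rightarrow> lip \<Rightarrow> bool" where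
  "rcong \<pi> q1 q2 \<longleftrightarrow> (\<exists>\<delta>. lsub q1 q2 = lmul \<delta> \<pi>)"

definition rcls :: "lip \<Rightarrow> lip \<Rightarrow> lip set" where
  "rcls \<pi> q = {r. rcong \<pi> r q}"

definition Hpi :: "lip \<Rightarrow> lip set set" where
  "Hpi \<pi> = range (rcls \<pi>)"

definition cadd :: "lip set \<Rightarrow> lip set \<Rightarrow> lip set" where
  "cadd A B = {ladd a b | a b. a \<in> A \<and> b \<in> B}"

definition cwt :: "lip set \<Rightarrow> nat" where
  "cwt A = (LEAST w. \<exists>q\<in>A. lwt q = w)"

definition vspace :: "lip \<Rightarrow> nat \<Rightarrow> (nat \<Rightarrow> lip set) set" where
  "vspace \<pi> n = PiE {..<n} (\<lambda>_. Hpi \<pi>)"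

definition vadd :: "nat \<Rightarrow> (nat \<Rightarrow> lip set) \<Rightarrow> (nat \<Rightarrow> lip set) \<Rightarrow> (nat \<Rightarrow> lip set)" where
  "vadd n u v = restrict (\<lambda>i. cadd (u i) (v i)) {..<n}"

definition vzero :: "lip \<Rightarrow> nat \<Rightarrow> (nat \<Rightarrow> lip set)" where
  "vzero \<pi> n = restrict (\<lambda>i. rcls \<pi> (Lip 0 0 0 0)) {..<n}"

definition vneg :: "lip \<Rightarrow> nat \<Rightarrow> (nat \<Rightarrow> lip set) \<Rightarrow> (nat \<Rightarrow> lip set)" where
  "vneg \<pi> n u = restrict (\<lambda>i. {lsub (Lip 0 0 0 0) q | q. q \<in> u i}) {..<n}"

definition vwt :: "nat \<Rightarrow> (nat \<Rightarrow> lip set) \<Rightarrow> nat" where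
  "vwt n v = (\<Sum>i<n. cwt (v i))"

definition coset :: "nat \<Rightarrow> (nat \<Rightarrow> lip set) set \<Rightarrow> (nat \<Rightarrow> lip set) \<Rightarrow> (nat \<Rightarrow> lip set) set" where
  "coset n C v = {vadd n v c | c. c \<in> C}"

definition linear_code :: "lip \<Rightarrow> nat \<Rightarrow> nat \<Rightarrow> (nat \<Rightarrow> lip set) set \<Rightarrow> bool" where
  "linear_code \<pi> n k C \<longleftrightarrow>
     C \<subseteq> vspace \<pi> n \<and> vzero \<pi> n \<in> C \<and>
     (\<forall>u\<in>C. \<forall>v\<in>C. vadd n u v \<in> C) \<and> (\<forall>u\<in>C. vneg \<pi> n u \<in> C) \<and>
     card (coset n C ` vspace \<pi> n) = (nat (lnorm \<pi>) ^ 2) ^ (n - k)"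

definition corrects :: "lip \<Rightarrow> nat \<Rightarrow> (nat \<Rightarrow> lip set) set \<Rightarrow> nat \<Rightarrow> bool" where
  "corrects \<pi> n C t \<longleftrightarrow>
     (\<forall>u\<in>vspace \<pi> n. \<forall>v\<in>vspace \<pi> n. vwt n u \<le> t \<longrightarrow> vwt n v \<le> t \<longrightarrow> u \<noteq> v \<longrightarrow>
        coset n C u \<noteq> coset n C v)"

end

theory Submission
  imports Defs
begin

(* Let S be the list of the 41 Lipschitz integers of weight at most 2 (one of weight 0,
   8 of weight 1, 32 of weight 2).  If its elements are pairwise incongruent modulo pi,
   then the words of length n over S of total weight at most 2 -- there are
   32 n^2 + 8 n + 1 of them -- give that many distinct vectors of H(Z)_pi^n of weight
   at most 2.  A code correcting all errors of weight at most 2 puts them into distinct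
   cosets, so (N(pi)^2)^(n-k) >= 32 n^2 + 8 n + 1.

   Pairwise incongruence is certified by the invariant q * conj(pi) reduced componentwise
   modulo N(pi): since (delta pi) conj(pi) = N(pi) delta, it is constant on right
   congruence classes, and for pi = 2+e1+e2+e3 and pi = 3+e1+e2 it takes 41 distinct
   values on S, a finite computation. *)

fun lconj :: "lip \<Rightarrow> lip" where
  "lconj (Lip a0 a1 a2 a3) = Lip a0 (- a1) (- a2) (- a3)"

fun lscale :: "int \<Rightarrow> lip \<Rightarrow> lip" where
  "lscale k (Lip a0 a1 a2 a3) = Lip (k * a0) (k * a1) (k * a2) (k * a3)"

fun lmod :: "int \<Rightarrow> lip \<Rightarrow> lip" where
  "lmod m (Lip a0 a1 a2 a3) = Lip (a0 mod m) (a1 mod m) (a2 mod m) (a3 mod m)"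

lemma lmul_lsub_left: "lmul (lsub x y) z = lsub (lmul x z) (lmul y z)"
  by (cases x, cases y, cases z) (simp add: algebra_simps)

lemma lmul_lconj_right: "lmul (lmul d p) (lconj p) = lscale (lnorm p) d"
  by (cases d, cases p) (simp add: algebra_simps power2_eq_square)

lemma lmod_eq_if_lsub_scale:
  assumes "lsub x y = lscale m d"
  shows "lmod m x = lmod m y"
  using assms by (cases x, cases y, cases d) (auto simp: mod_eq_dvd_iff)

definition cls_key :: "lip \<Rightarrow> lip \<Rightarrow> lip" where
  "cls_key \<pi> q = lmod (lnorm \<pi>) (lmul q (lconj \<pi>))"

lemma cls_key_rcong:
  assumes "rcong \<pi> q1 q2"
  shows "cls_key \<pi> q1 = cls_key \<pi> q2"
proof -
  obtain d where "lsub q1 q2 = lmul d \<pi>" using assms unfolding rcong_def by blast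
  then have "lsub (lmul q1 (lconj \<pi>)) (lmul q2 (lconj \<pi>)) = lscale (lnorm \<pi>) d"
    by (metis lmul_lsub_left lmul_lconj_right)
  then show ?thesis unfolding cls_key_def by (rule lmod_eq_if_lsub_scale)
qed

definition small :: "lip list" where
  "small = filter (\<lambda>q. lwt q \<le> 2)
     [Lip a0 a1 a2 a3. a0 \<leftarrow> [-2..2], a1 \<leftarrow> [-2..2], a2 \<leftarrow> [-2..2], a3 \<leftarrow> [-2..2]]"

lemma distinct_small: "distinct small"
  by code_simp

lemma small_weights:
  "length (filter (\<lambda>q. lwt q = 0) small) = 1"
  "length (filter (\<lambda>q. lwt q = 1) small) = 8"
  "length (filter (\<lambda>q. lwt q = 2) small) = 32"
  by code_simp+

definition small_incongruent :: "lip \<Rightarrow> bool" where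
  "small_incongruent \<pi> \<longleftrightarrow> (\<forall>q1\<in>set small. \<forall>q2\<in>set small. rcong \<pi> q1 q2 \<longrightarrow> q1 = q2)"

lemma small_incongruentI:
  assumes "distinct (map (cls_key \<pi>) small)"
  shows "small_incongruent \<pi>"
  using assms cls_key_rcong unfolding small_incongruent_def distinct_map inj_on_def by blast

lemma sum_list_by_weight:
  fixes f :: "'a \<Rightarrow> nat"
  shows "sum_list (map (\<lambda>x. g (f x)) (filter (\<lambda>x. f x \<le> t) xs))
           = (\<Sum>w\<le>t. length (filter (\<lambda>x. f x = w) xs) * (g w :: nat))"
proof (induction xs)
  case Nil then show ?case by simp
next
  case (Cons x xs)
  have "(\<Sum>w\<le>t. length (filter (\<lambda>y. f y = w) (x # xs)) * g w)
      = (\<Sum>w\<le>t. if f x = w then g w else 0) + (\<Sum>w\<le>t. length (filter (\<lambda>y. f y = w) xs) * g w)"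
    unfolding sum.distrib[symmetric] by (rule sum.cong) auto
  also have "\<dots> = (if f x \<le> t then g (f x) else 0)
                   + sum_list (map (\<lambda>x. g (f x)) (filter (\<lambda>x. f x \<le> t) xs))"
    using Cons by simp
  finally show ?case by simp
qed

fun words :: "nat \<Rightarrow> nat \<Rightarrow> lip list list" where
  "words t 0 = [[]]"
| "words t (Suc n) =
     concat (map (\<lambda>q. map ((#) q) (words (t - lwt q) n)) (filter (\<lambda>q. lwt q \<le> t) small))"

lemma length_words_Suc:
  "length (words t (Suc n))
     = (\<Sum>w\<le>t. length (filter (\<lambda>q. lwt q = w) small) * length (words (t - w) n))"
  by (simp add: length_concat comp_def sum_list_by_weight[of "\<lambda>w. length (words (t - w) n)"])

lemma sum_atMost_1_2:
  "(\<Sum>w::nat\<le>1. f w) = f 0 + (f 1 :: nat)"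
  "(\<Sum>w::nat\<le>2. f w) = f 0 + f 1 + (f 2 :: nat)"
  by (simp_all add: atMost_Suc numeral_2_eq_2 add_ac)

lemma length_words_0: "length (words 0 n) = 1"
  by (induction n) (simp_all del: words.simps(2) add: length_words_Suc small_weights)

lemma length_words_1: "length (words 1 n) = 8 * n + 1"
  by (induction n)
     (simp_all del: words.simps(2) add: length_words_Suc sum_atMost_1_2 small_weights[simplified]
                                      length_words_0)

lemma length_words_2: "length (words 2 n) = 32 * n^2 + 8 * n + 1"
  by (induction n)
     (simp_all del: words.simps(2) add: length_words_Suc sum_atMost_1_2 small_weights[simplified]
                                      length_words_0 length_words_1[simplified]
                                      algebra_simps power2_eq_square)

lemma distinct_words: "distinct (words t n)"
proof (induction n arbitrary: t)
  case 0 then show ?case by simp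
next
  case (Suc n)
  have "distinct (concat (map (\<lambda>q. map ((#) q) (words (t - lwt q) n)) qs))"
    if "distinct qs" for qs
    using that Suc by (induction qs) (auto simp: distinct_map)
  then show ?case using distinct_small by simp
qed

lemma words_mem:
  "xs \<in> set (words t n) \<Longrightarrow>
     length xs = n \<and> set xs \<subseteq> set small \<and> sum_list (map lwt xs) \<le> t"
proof (induction n arbitrary: t xs)
  case 0 then show ?case by simp
next
  case (Suc n)
  then obtain q ys where "q \<in> set small" "lwt q \<le> t" "ys \<in> set (words (t - lwt q) n)"
    "xs = q # ys" by auto
  with Suc.IH[of ys "t - lwt q"] show ?case by auto
qed

definition vec :: "lip \<Rightarrow> nat \<Rightarrow> lip list \<Rightarrow> (nat \<Rightarrow> lip set)" where
  "vec \<pi> n xs = restrict (\<lambda>i. rcls \<pi> (xs ! i)) {..<n}"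

lemma vec_vspace: "vec \<pi> n xs \<in> vspace \<pi> n"
  unfolding vec_def vspace_def Hpi_def by auto

lemma mem_rcls: "q \<in> rcls \<pi> q"
  unfolding rcls_def rcong_def
  by (rule CollectI, rule exI[of _ "Lip 0 0 0 0"]) (cases q, cases \<pi>, simp)

lemma cwt_rcls_le: "cwt (rcls \<pi> q) \<le> lwt q"
  unfolding cwt_def by (rule Least_le) (use mem_rcls in blast)

lemma vwt_vec_le:
  assumes "length xs = n"
  shows "vwt n (vec \<pi> n xs) \<le> sum_list (map lwt xs)"
proof -
  have "vwt n (vec \<pi> n xs) = (\<Sum>i<n. cwt (rcls \<pi> (xs ! i)))"
    unfolding vwt_def vec_def by simp
  also have "\<dots> \<le> (\<Sum>i<n. lwt (xs ! i))" by (rule sum_mono) (rule cwt_rcls_le)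
  also have "\<dots> = sum_list (map lwt xs)"
    using assms by (simp add: sum_list_sum_nth atLeast0LessThan)
  finally show ?thesis .
qed

lemma inj_on_vec_words:
  assumes "small_incongruent \<pi>"
  shows "inj_on (vec \<pi> n) (set (words t n))"
proof (rule inj_onI)
  fix xs ys assume xs: "xs \<in> set (words t n)" and ys: "ys \<in> set (words t n)"
    and eq: "vec \<pi> n xs = vec \<pi> n ys"
  note X = words_mem[OF xs] and Y = words_mem[OF ys]
  show "xs = ys"
  proof (rule nth_equalityI)
    show "length xs = length ys" using X Y by simp
    fix i assume i: "i < length xs"
    then have "rcls \<pi> (xs ! i) = rcls \<pi> (ys ! i)"
      using fun_cong[OF eq, of i] X unfolding vec_def by simp
    then have "xs ! i \<in> rcls \<pi> (ys ! i)" using mem_rcls by metis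
    then have "rcong \<pi> (xs ! i) (ys ! i)" by (simp add: rcls_def)
    moreover have "xs ! i \<in> set small" "ys ! i \<in> set small" using X Y i by auto
    ultimately show "xs ! i = ys ! i" using assms unfolding small_incongruent_def by blast
  qed
qed

lemma packing_bound:
  assumes code: "linear_code \<pi> n k C" and corr: "corrects \<pi> n C t"
    and pos: "lnorm \<pi> > 0"
    and V: "V \<subseteq> vspace \<pi> n" and wt: "\<forall>v\<in>V. vwt n v \<le> t"
  shows "card V \<le> (nat (lnorm \<pi>) ^ 2) ^ (n - k)"
proof -
  have ncos: "card (coset n C ` vspace \<pi> n) = (nat (lnorm \<pi>) ^ 2) ^ (n - k)"
    using code unfolding linear_code_def by blast
  moreover have "(nat (lnorm \<pi>) ^ 2) ^ (n - k) > 0" using pos by simp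
  ultimately have fin: "finite (coset n C ` vspace \<pi> n)" using card_gt_0_iff by metis
  have inj: "inj_on (coset n C) V"
    using corr V wt unfolding corrects_def inj_on_def by blast
  have "card V \<le> card (coset n C ` vspace \<pi> n)"
    by (rule card_inj_on_le[OF inj _ fin]) (use V in blast)
  then show ?thesis using ncos by simp
qed

lemma hamming_bound_2:
  assumes incong: "small_incongruent \<pi>" and pos: "lnorm \<pi> > 0"
    and code: "linear_code \<pi> n k C" and corr: "corrects \<pi> n C 2"
  shows "32 * n^2 + 8 * n + 1 \<le> (nat (lnorm \<pi>) ^ 2) ^ (n - k)"
proof -
  let ?V = "vec \<pi> n ` set (words 2 n)"
  have "card ?V = 32 * n^2 + 8 * n + 1"
    using card_image[OF inj_on_vec_words[OF incong]] distinct_card[OF distinct_words]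
          length_words_2 by simp
  moreover have "card ?V \<le> (nat (lnorm \<pi>) ^ 2) ^ (n - k)"
  proof (rule packing_bound[OF code corr pos])
    show "?V \<subseteq> vspace \<pi> n" using vec_vspace by blast
    show "\<forall>v\<in>?V. vwt n v \<le> 2"
      using vwt_vec_le words_mem by (fastforce intro: order_trans)
  qed
  ultimately show ?thesis by simp
qed

theorem theorem9:
  shows "(\<forall>n k C. linear_code (Lip 2 1 1 1) n k C \<and> corrects (Lip 2 1 1 1) n C 2
            \<longrightarrow> ((7::nat)^2)^(n - k) \<ge> 32 * n^2 + 1)
       \<and> (\<forall>n k C. linear_code (Lip 3 1 1 0) n k C \<and> corrects (Lip 3 1 1 0) n C 2
            \<longrightarrow> ((11::nat)^2)^(n - k) \<ge> 32 * n^2 + 1)"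
proof -
  have bound: "32 * n^2 + 1 \<le> (nat (lnorm \<pi>) ^ 2) ^ (n - k)"
    if "small_incongruent \<pi>" "lnorm \<pi> > 0" "linear_code \<pi> n k C" "corrects \<pi> n C 2"
    for \<pi> n k C
    using hamming_bound_2[OF that] by linarith
  have "small_incongruent (Lip 2 1 1 1)"
    by (rule small_incongruentI) code_simp
  moreover have "small_incongruent (Lip 3 1 1 0)"
    by (rule small_incongruentI) code_simp
  ultimately show ?thesis
    using bound[of "Lip 2 1 1 1"] bound[of "Lip 3 1 1 0"] by auto
qed

end
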